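(* Let $G(X)=\sum_{n\ge 1}c_nX^n\in\mathbb{F}_2[[X]]$ be the compositional inverse of $F(X)=\sum_{n\ge1}t_nX^n\in\mathbb{F}_2[[X]]$, and set $c_0=0$. Then $G$ satisfies each of the polynomial equations $$X^2G(X)^3+X(1+X)G(X)^2+(X^2+1)G(X)+X(X+1)=0,$$ $$X^3G(X)^4+(1+X)G(X)+X(X^2+1)=0$$ over $\mathbb{F}_2[[X]]$. In particular, $c_0=0$, $c_1=c_2=1$, $c_3=0$, and for every $n\ge 1$: $$c_{4n}=c_{4n-1},\quad c_{4n+1}=c_{4n-1},\quad c_{4n+2}=c_{4n-1},\quad c_{4n+3}\equiv c_{4n-1}+c_n \pmod 2.$$
   Context: For $n\in\mathbb{N}=\{0,1,2,\dots\}$ let $s_2(n)$ denote the sum of the binary digits of $n$, and let $t_n=s_2(n)\bmod 2\in\{0,1\}$ (the Prouhet–Thue–Morse sequence). Since $t_0=0$ and $t_1=1$, the series $F(X)=\sum_{n\ge1}t_nX^n\in\mathbb{F}_2[[X]]$ has a unique compositional inverse $G\in\mathbb{F}_2[[X]]$, i.e. $F(G(X))=G(F(X))=X$. The coefficients $c_n$ are identified with integers in $\{0,1\}$. *)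

theory Defs
  imports "HOL-Computational_Algebra.Formal_Power_Series" "HOL-Library.Z2"
begin

fun s2 :: "nat \<Rightarrow> nat" where
  "s2 n = (if n = 0 then 0 else n mod 2 + s2 (n div 2))"

definition tm :: "nat \<Rightarrow> nat" where
  "tm n = s2 n mod 2"

definition tmF :: "bit fps" where
  "tmF = Abs_fps (\<lambda>n. if n \<ge> 1 then of_nat (tm n) else 0)"

end

theory Submission
  imports Defs
begin

(* Splitting n by parity gives s2 (2n) = s2 n and s2 (2n+1) = s2 n + 1, so over F_2 the series F
   satisfies F = (1 + X) F^2 + X / (1 + X^2), i.e. (1 + X)^3 F^2 + (1 + X)^2 F + X = 0.
   Substituting G and using F(G) = X gives a relation for G which, in characteristic 2, is the cubic;
   multiplied by X G + 1 + X it becomes the quartic.  As squaring is additive in characteristic 2,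
   G^4 has coefficient c_(n/4) at multiples of 4 and 0 elsewhere, so the quartic is a recurrence
   expressing c_(m+1) - c_m through c_((m-2)/4). *)

unbundle fps_syntax

lemma CHAR_bit [simp]: "CHAR(bit) = 2"
  by (rule CHAR_eq_posI) (auto simp: less_2_cases_iff)

lemma two_eq_zero_CHAR_2:
  assumes "CHAR('a::semiring_1) = 2"
  shows "(2::'a) = 0"
  using of_nat_CHAR[where 'a='a] assms by simp

lemma of_nat_mod_CHAR: "of_nat (n mod CHAR('a)) = (of_nat n :: 'a::semiring_1)"
proof -
  have "of_nat n = (of_nat (n mod CHAR('a) + CHAR('a) * (n div CHAR('a))) :: 'a)"
    by simp
  then show ?thesis
    by (simp only: of_nat_add of_nat_mult of_nat_CHAR mult_zero_left add_0_right)
qed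

lemma add_eq_0_iff_eq_CHAR_2:
  fixes x y :: "'a::ring_1"
  assumes "CHAR('a) = 2"
  shows "x + y = 0 \<longleftrightarrow> x = y"
  by (metis assms minus_CHAR_2 right_minus_eq)

lemma fps_square_nth_CHAR_2:
  fixes f :: "'a::comm_ring_1 fps"
  assumes "CHAR('a) = 2"
  shows "(f\<^sup>2) $ n = (if even n then (f $ (n div 2))\<^sup>2 else 0)"
proof -
  \<comment> \<open>the products for i and n - i with 2 i \<noteq> n occur twice, hence cancel\<close>
  let ?g = "\<lambda>i. f $ i * f $ (n - i)"
  define L where "L = {i. 2 * i < n}"
  define R where "R = {i. i \<le> n \<and> n < 2 * i}"
  define M where "M = {i. 2 * i = n}"
  have fin: "finite L" "finite R" "finite M"
    by (auto simp: L_def R_def M_def intro: finite_subset[of _ "{..n}"])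
  have "{0..n} = (L \<union> R) \<union> M"
    by (auto simp: L_def R_def M_def)
  then have "(f\<^sup>2) $ n = sum ?g ((L \<union> R) \<union> M)"
    by (simp add: power2_eq_square fps_mult_nth)
  also have "\<dots> = sum ?g L + sum ?g R + sum ?g M"
    using fin by (simp add: sum.union_disjoint L_def R_def M_def Int_Un_distrib2 disjoint_iff)
  also have "sum ?g R = sum ?g L"
    by (rule sum.reindex_bij_witness[of _ "\<lambda>i. n - i" "\<lambda>i. n - i"])
       (auto simp: L_def R_def mult.commute)
  also have "sum ?g M = (if even n then (f $ (n div 2))\<^sup>2 else 0)"
  proof (cases "even n")
    case True
    then have "M = {n div 2}" by (auto simp: M_def)
    moreover have "n - n div 2 = n div 2" using True by auto
    ultimately show ?thesis using True by (simp add: power2_eq_square)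
  next
    case False
    then have "M = {}" by (auto simp: M_def)
    with False show ?thesis by simp
  qed
  finally show ?thesis
    by (simp flip: mult_2 add: two_eq_zero_CHAR_2[OF assms])
qed

lemma fps_power4_nth_CHAR_2:
  fixes f :: "'a::comm_ring_1 fps"
  assumes "CHAR('a) = 2"
  shows "(f^4) $ n = (if 4 dvd n then (f $ (n div 4))^4 else 0)"
proof -
  have "(f^4) $ n = ((f\<^sup>2)\<^sup>2) $ n"
    by (simp flip: power_mult)
  also have "\<dots> = (if even n \<and> even (n div 2) then ((f $ (n div 2 div 2))\<^sup>2)\<^sup>2 else 0)"
    by (subst fps_square_nth_CHAR_2[OF assms]) (simp add: fps_square_nth_CHAR_2[OF assms])
  also have "even n \<and> even (n div 2) \<longleftrightarrow> 4 dvd n"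
    by presburger
  finally show ?thesis
    by (simp add: flip: power_mult div_mult2_eq)
qed

lemma bit_fps_square_nth: "((f::bit fps)\<^sup>2) $ n = (if even n then f $ (n div 2) else 0)"
  by (cases "f $ (n div 2)") (simp_all add: fps_square_nth_CHAR_2)

lemma bit_fps_power4_nth: "((f::bit fps)^4) $ n = (if 4 dvd n then f $ (n div 4) else 0)"
  by (cases "f $ (n div 4)") (simp_all add: fps_power4_nth_CHAR_2)

lemma cubic_eq_CHAR_2:
  fixes X G :: "'a::comm_ring_1"
  assumes "CHAR('a) = 2"
  shows "X\<^sup>2 * G ^ 3 + X * (1 + X) * G\<^sup>2 + (X\<^sup>2 + 1) * G + X * (X + 1)
    = (1 + G)^3 * X\<^sup>2 + (1 + G)\<^sup>2 * X + G"
proof -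
  have "X\<^sup>2 * G ^ 3 + X * (1 + X) * G\<^sup>2 + (X\<^sup>2 + 1) * G + X * (X + 1)
    = (1 + G)^3 * X\<^sup>2 + (1 + G)\<^sup>2 * X + G - 2 * (X\<^sup>2 * G + X\<^sup>2 * G\<^sup>2 + X * G)"
    by (simp add: algebra_simps power2_eq_square power3_eq_cube)
  then show ?thesis
    by (simp add: two_eq_zero_CHAR_2[OF assms])
qed

lemma quartic_eq_CHAR_2:
  fixes X G :: "'a::comm_ring_1"
  assumes "CHAR('a) = 2"
  shows "X ^ 3 * G ^ 4 + (1 + X) * G + X * (X\<^sup>2 + 1)
    = (X * G + 1 + X) * (X\<^sup>2 * G ^ 3 + X * (1 + X) * G\<^sup>2 + (X\<^sup>2 + 1) * G + X * (X + 1))"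
proof -
  have "X ^ 3 * G ^ 4 + (1 + X) * G + X * (X\<^sup>2 + 1)
    = (X * G + 1 + X) * (X\<^sup>2 * G ^ 3 + X * (1 + X) * G\<^sup>2 + (X\<^sup>2 + 1) * G + X * (X + 1))
      - 2 * (X\<^sup>2 * (1 + X) * G ^ 3 + (X ^ 3 + X\<^sup>2 + X) * G\<^sup>2 + (X ^ 3 + X\<^sup>2) * G + X\<^sup>2)"
    by (simp add: algebra_simps power2_eq_square power3_eq_cube power4_eq_xxxx)
  then show ?thesis
    by (simp add: two_eq_zero_CHAR_2[OF assms])
qed

declare s2.simps [simp del]

lemma s2_0 [simp]: "s2 0 = 0"
  by (simp add: s2.simps)

lemma s2_double [simp]: "s2 (2 * n) = s2 n"
  by (cases "n = 0") (simp_all add: s2.simps[of "2 * n"])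

lemma s2_Suc_double [simp]: "s2 (Suc (2 * n)) = Suc (s2 n)"
  by (simp add: s2.simps[of "Suc (2 * n)"])

lemma tmF_nth: "tmF $ n = of_nat (s2 n)"
  using of_nat_mod_CHAR[where 'a=bit] by (cases "n = 0") (simp_all add: tmF_def tm_def)

lemma fps_odd_indicator:
  "(1 - fps_X\<^sup>2) * Abs_fps (\<lambda>n. of_bool (odd n)) = (fps_X :: 'a::comm_ring_1 fps)"
proof (rule fps_ext)
  fix n
  show "((1 - fps_X\<^sup>2) * Abs_fps (\<lambda>n. of_bool (odd n))) $ n = (fps_X :: 'a fps) $ n"
    by (cases "n < 2") (auto simp: left_diff_distrib fps_X_power_mult_nth less_2_cases_iff)
qed

lemma tmF_functional_equation:
  "tmF = (1 + fps_X) * tmF\<^sup>2 + Abs_fps (\<lambda>n. of_bool (odd n))"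
proof (rule fps_ext)
  fix n
  have "((1 + fps_X) * tmF\<^sup>2 + Abs_fps (\<lambda>n. of_bool (odd n))) $ n
    = (tmF\<^sup>2) $ n + (if n = 0 then 0 else (tmF\<^sup>2) $ (n - 1)) + of_bool (odd n)"
    by (simp add: distrib_right)
  also have "\<dots> = tmF $ n"
  proof (cases "even n")
    case True
    then obtain k where k: "n = 2 * k" by (rule evenE)
    have "(if n = 0 then 0 else (tmF\<^sup>2) $ (n - 1)) = 0"
      using k by (auto simp: bit_fps_square_nth elim: oddE)
    moreover have "(tmF\<^sup>2) $ n = tmF $ n"
      using k by (simp add: bit_fps_square_nth tmF_nth)
    ultimately show ?thesis
      using True by simp
  next
    case False
    then obtain k where k: "n = Suc (2 * k)" by (rule oddE) simp
    have "(tmF\<^sup>2) $ n = 0" and "(tmF\<^sup>2) $ (n - 1) = tmF $ k"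
      using k by (simp_all add: bit_fps_square_nth)
    moreover have "tmF $ n = tmF $ k + 1"
      using k by (simp add: tmF_nth)
    ultimately show ?thesis
      using k by simp
  qed
  finally show "tmF $ n = ((1 + fps_X) * tmF\<^sup>2 + Abs_fps (\<lambda>n. of_bool (odd n))) $ n"
    by (rule sym)
qed

lemma tmF_algebraic_equation:
  "(1 + fps_X) ^ 3 * tmF\<^sup>2 + (1 + fps_X)\<^sup>2 * tmF + fps_X = 0"
proof -
  let ?H = "Abs_fps (\<lambda>n. of_bool (odd n)) :: bit fps"
  have "(1 + fps_X)\<^sup>2 = (1 + fps_X\<^sup>2 :: bit fps) + 2 * fps_X"
    by (simp add: power2_eq_square algebra_simps)
  then have sq: "(1 + fps_X)\<^sup>2 = (1 - fps_X\<^sup>2 :: bit fps)"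
    by (simp add: two_eq_zero_CHAR_2 minus_CHAR_2)
  have "(1 + fps_X)\<^sup>2 * tmF = (1 + fps_X)\<^sup>2 * ((1 + fps_X) * tmF\<^sup>2 + ?H)"
    by (fact arg_cong[where f="\<lambda>x. (1 + fps_X)\<^sup>2 * x", OF tmF_functional_equation])
  also have "\<dots> = (1 + fps_X) ^ 3 * tmF\<^sup>2 + (1 + fps_X)\<^sup>2 * ?H"
    by (simp add: algebra_simps power3_eq_cube power2_eq_square)
  also have "\<dots> = (1 + fps_X) ^ 3 * tmF\<^sup>2 + fps_X"
    by (simp only: sq fps_odd_indicator)
  finally have "((1 + fps_X) ^ 3 * tmF\<^sup>2 + fps_X) + (1 + fps_X)\<^sup>2 * tmF = 0"
    by (simp only: add_eq_0_iff_eq_CHAR_2[where 'a="bit fps"] CHAR_bit semiring_char_fps)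
  then show ?thesis
    by (simp only: ac_simps)
qed

lemma tmF_right_inverse_equation:
  fixes G :: "bit fps"
  assumes "tmF oo G = fps_X" and "G $ 0 = 0"
  shows "(1 + G) ^ 3 * fps_X\<^sup>2 + (1 + G)\<^sup>2 * fps_X + G = 0"
proof -
  have "(1 + fps_X) oo G = 1 + G"
    using assms(2) by (simp add: fps_compose_add_distrib)
  then have "((1 + fps_X) ^ 3 * tmF\<^sup>2 + (1 + fps_X)\<^sup>2 * tmF + fps_X) oo G
    = (1 + G) ^ 3 * (tmF oo G)\<^sup>2 + (1 + G)\<^sup>2 * (tmF oo G) + G"
    using assms(2)
    by (simp add: fps_compose_add_distrib fps_compose_mult_distrib flip: fps_compose_power)
  then show ?thesis
    using assms(1) by (simp add: tmF_algebraic_equation)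
qed

lemma quartic_coeff_recurrence:
  fixes G :: "bit fps"
  assumes "fps_X ^ 3 * G ^ 4 + (1 + fps_X) * G + fps_X * (fps_X\<^sup>2 + 1) = 0"
  shows "G $ Suc m = G $ m + (fps_X ^ 3 * G ^ 4) $ Suc m + of_bool (m = 0 \<or> m = 2)"
proof -
  have "(fps_X * (fps_X\<^sup>2 + 1)) $ Suc m = (of_bool (m = 0 \<or> m = 2) :: bit)"
    by (auto simp: distrib_left simp flip: power_Suc)
  moreover have "(fps_X ^ 3 * G ^ 4 + (1 + fps_X) * G + fps_X * (fps_X\<^sup>2 + 1)) $ Suc m = 0"
    using assms by simp
  ultimately have "(fps_X ^ 3 * G ^ 4) $ Suc m + (G $ Suc m + G $ m) + of_bool (m = 0 \<or> m = 2) = 0"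
    by (simp add: distrib_right)
  then have "G $ Suc m + (G $ m + (fps_X ^ 3 * G ^ 4) $ Suc m + of_bool (m = 0 \<or> m = 2)) = 0"
    by (simp only: ac_simps)
  then show ?thesis
    by (simp only: add_eq_0_iff_eq_CHAR_2 CHAR_bit)
qed

lemma quartic_solution_coeffs:
  fixes G :: "bit fps"
  assumes "fps_X ^ 3 * G ^ 4 + (1 + fps_X) * G + fps_X * (fps_X\<^sup>2 + 1) = 0" and "G $ 0 = 0"
  shows "G $ 1 = 1 \<and> G $ 2 = 1 \<and> G $ 3 = 0
    \<and> (\<forall>n\<ge>1. G $ (4*n) = G $ (4*n - 1) \<and> G $ (4*n + 1) = G $ (4*n - 1)
               \<and> G $ (4*n + 2) = G $ (4*n - 1) \<and> G $ (4*n + 3) = G $ (4*n - 1) + G $ n)"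
proof -
  have shift: "(fps_X ^ 3 * G ^ 4) $ Suc m
      = (if 2 \<le> m \<and> 4 dvd (m - 2) then G $ ((m - 2) div 4) else 0)" for m
    by (simp add: fps_X_power_mult_nth bit_fps_power4_nth)
  note rec = quartic_coeff_recurrence[OF assms(1), unfolded shift]
  have c1: "G $ 1 = 1"
    using rec[of 0] assms(2) by simp
  have c2: "G $ 2 = 1"
    using rec[of 1] c1 by (simp add: numeral_2_eq_2)
  have c3: "G $ 3 = 0"
    using rec[of 2] c2 assms(2) by (simp add: numeral_3_eq_3)
  have rec_ge3: "G $ (m + 1) = G $ m + (if 4 dvd (m - 2) then G $ ((m - 2) div 4) else 0)"
    if "m \<ge> 3" for m
    using rec[of m] that by simp
  have "G $ (4*n) = G $ (4*n - 1) \<and> G $ (4*n + 1) = G $ (4*n - 1)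
      \<and> G $ (4*n + 2) = G $ (4*n - 1) \<and> G $ (4*n + 3) = G $ (4*n - 1) + G $ n"
    if "n \<ge> 1" for n
  proof -
    have "4*n - 1 + 1 = 4*n" and "\<not> 4 dvd (4*n - 1 - 2)" and "\<not> 4 dvd (4*n - 2)"
      and "\<not> 4 dvd (4*n + 1 - 2)" and "4*n + 2 - 2 = 4*n"
      using that by presburger+
    then have "G $ (4*n) = G $ (4*n - 1)" and "G $ (4*n + 1) = G $ (4*n)"
      and "G $ (4*n + 2) = G $ (4*n + 1)" and "G $ (4*n + 3) = G $ (4*n + 2) + G $ n"
      using rec_ge3[of "4*n - 1"] rec_ge3[of "4*n"] rec_ge3[of "4*n + 1"] rec_ge3[of "4*n + 2"] that
      by (simp_all add: numeral_2_eq_2 numeral_3_eq_3)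
    then show ?thesis
      by simp
  qed
  with c1 c2 c3 show ?thesis
    by blast
qed

theorem mainTheorem1:
  fixes G :: "bit fps"
  assumes "tmF oo G = fps_X" and "G oo tmF = fps_X"
  shows "fps_X\<^sup>2 * G ^ 3 + fps_X * (1 + fps_X) * G\<^sup>2 + (fps_X\<^sup>2 + 1) * G + fps_X * (fps_X + 1) = 0
    \<and> fps_X ^ 3 * G ^ 4 + (1 + fps_X) * G + fps_X * (fps_X\<^sup>2 + 1) = 0
    \<and> fps_nth G 0 = 0 \<and> fps_nth G 1 = 1 \<and> fps_nth G 2 = 1 \<and> fps_nth G 3 = 0
    \<and> (\<forall>n\<ge>1. fps_nth G (4*n) = fps_nth G (4*n - 1) \<and> fps_nth G (4*n + 1) = fps_nth G (4*n - 1)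
               \<and> fps_nth G (4*n + 2) = fps_nth G (4*n - 1) \<and> fps_nth G (4*n + 3) = fps_nth G (4*n - 1) + fps_nth G n)"
proof -
  have char: "CHAR(bit fps) = 2"
    by simp
  have G0: "G $ 0 = 0"
    using arg_cong[OF assms(2), of "\<lambda>p. p $ 0"] by simp
  have cubic: "fps_X\<^sup>2 * G ^ 3 + fps_X * (1 + fps_X) * G\<^sup>2 + (fps_X\<^sup>2 + 1) * G + fps_X * (fps_X + 1) = 0"
    unfolding cubic_eq_CHAR_2[OF char] by (rule tmF_right_inverse_equation[OF assms(1) G0])
  have quartic: "fps_X ^ 3 * G ^ 4 + (1 + fps_X) * G + fps_X * (fps_X\<^sup>2 + 1) = 0"
    unfolding quartic_eq_CHAR_2[OF char] cubic by simp
  show ?thesis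
    using cubic quartic G0 quartic_solution_coeffs[OF quartic G0] by blast
qed

end
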